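(* For every implication of canonical form $(\ast)$ and every environment $\eta$ of ordinary variables, if the Parametricity Condition holds for the implication and $\eta$, then the implication is binary $\eta$-valid, i.e. $\bigwedge_i\varphi_i*a_{i,1}*\cdots*a_{i,M_i}\models^2_\eta\bigvee_j\psi_j*b_{j,1}*\cdots*b_{j,N_j}$.
   Context: $\mathsf{Heap}$: finite partial functions $\mathsf{PosInt}\to\mathsf{Int}$; $g\sqsubseteq h$ means $h$ extends $g$; $h\cdot g$ is union of disjoint heaps; componentwise on $\mathsf{Heap}^n$. $\mathsf{IRel}_n$: upward closed subsets of $\mathsf{Heap}^n$; $p*q=\{\mathbf f\cdot\mathbf g\mid\mathbf f\in p,\mathbf g\in q,\text{componentwise disjoint}\}$. $\Delta_n(X)=\{(h_1,\dots,h_n)\mid\exists f\in X.\ \forall k.\ f\sqsubseteq h_k\}$ for $X\subseteq\mathsf{Heap}$. Assertions: built from primitive assertions $P$ (e.g. $E\hookrightarrow F$), assertion variables, $\mathsf{true},\mathsf{false},\wedge,\vee,*$, quantifiers over integer variables. $n$-ary meaning under $\eta$ (ordinary variables to integers) and $\rho:\mathsf{AVar}\to\mathsf{IRel}_n$: $[\![P]\!]^n=\Delta_n([\![P]\!]^{\mathrm{prim}}_\eta)$ with $[\![P]\!]^{\mathrm{prim}}_\eta\subseteq\mathsf{Heap}$ the standard meaning, $[\![a]\!]^n=\rho(a)$, connectives by $\mathsf{Heap}^n,\emptyset,\cap,\cup,*$, unions/intersections over integer values. $\varphi\models^n_\eta\psi$ ($n$-ary $\eta$-validity) means $[\![\varphi]\!]^n_{\eta,\rho}\subseteq[\![\psi]\!]^n_{\eta,\rho}$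 for all $\rho:\mathsf{AVar}\to\mathsf{IRel}_n$. Canonical form $(\ast)$: $\bigwedge_{i=1}^M\varphi_i*a_{i,1}*\cdots*a_{i,M_i}\Rightarrow\bigvee_{j=1}^N\psi_j*b_{j,1}*\cdots*b_{j,N_j}$ with $M\ge1$, $N\ge0$, $\varphi_i,\psi_j$ free of assertion variables (so their meanings do not depend on $\rho$; write $[\![\varphi_i]\!]^1_\eta$), and every $b_{j,k}$ occurring among the $a_{i,k}$. Let $V=\{a_{i,k}\}$, $\Pi(i)(c)=|\{k\mid a_{i,k}=c\}|$, $\Omega(j)(c)=|\{k\mid b_{j,k}=c\}|$ for $c\in V$; $\Pi(i)\ge\Omega(j)$ means $\Pi(i)(c)\ge\Omega(j)(c)$ for all $c\in V$. Disjunct $j$ is empty if $N_j=0$. Parametricity Condition (PC) for the implication and $\eta$: for all $h,h_1,\dots,h_M\in\mathsf{Heap}$ with $h_i\sqsubseteq h$ and $h_i\in[\![\varphi_i]\!]^1_\eta$ for all $i$, at least one of: (1) there are $i,j$ with $h_i\in[\![\psi_j]\!]^1_\eta$ and $\Pi(i)\ge\Omega(j)$; (2) there is $j$ with disjunct $j$ empty and $h\in[\![\psi_j]\!]^1_\eta$. *)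

theory Defs
  imports Main
begin

text \<open>Heaps: finite partial functions from positive integers to integers.
  h \<sqsubseteq> g is map_le; h\<cdot>g is map_add of disjoint heaps.\<close>

type_synonym heap = "int \<rightharpoonup> int"

definition heaps :: "heap set" where
  "heaps = {h. finite (dom h) \<and> dom h \<subseteq> {0<..}}"

text \<open>Heap^n as lists of heaps of length n (componentwise order/union).\<close>

definition tuples :: "nat \<Rightarrow> heap list set" where
  "tuples n = {hs. length hs = n \<and> set hs \<subseteq> heaps}"

definition IRel :: "nat \<Rightarrow> heap list set set" where
  "IRel n = {R. R \<subseteq> tuples n \<and>
      (\<forall>hs\<in>R. \<forall>gs\<in>tuples n. list_all2 map_le hs gs \<longrightarrow> gs \<in> R)}"

definition sepstar :: "heap list set \<Rightarrow> heap list set \<Rightarrow> heap list set" where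
  "sepstar p q = {map2 (++) fs gs | fs gs. fs \<in> p \<and> gs \<in> q \<and>
      list_all2 (\<lambda>f g. dom f \<inter> dom g = {}) fs gs}"

definition Delta :: "nat \<Rightarrow> heap set \<Rightarrow> heap list set" where
  "Delta n X = {hs \<in> tuples n. \<exists>f\<in>X. \<forall>h\<in>set hs. f \<subseteq>\<^sub>m h}"

text \<open>'p: primitive assertions, 'v: ordinary (integer) variables, 'a: assertion variables.\<close>

datatype ('p, 'v, 'a) assn =
    Prim 'p
  | AV 'a
  | TT
  | FF
  | Conj "('p, 'v, 'a) assn" "('p, 'v, 'a) assn"
  | Disj "('p, 'v, 'a) assn" "('p, 'v, 'a) assn"
  | Star "('p, 'v, 'a) assn" "('p, 'v, 'a) assn"
  | Ex 'v "('p, 'v, 'a) assn"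
  | All 'v "('p, 'v, 'a) assn"

text \<open>n-ary semantics; P gives the standard (unary, primitive) meaning of primitive assertions.\<close>

fun sem :: "('p \<Rightarrow> ('v \<Rightarrow> int) \<Rightarrow> heap set) \<Rightarrow> nat \<Rightarrow> ('p, 'v, 'a) assn
             \<Rightarrow> ('v \<Rightarrow> int) \<Rightarrow> ('a \<Rightarrow> heap list set) \<Rightarrow> heap list set" where
  "sem P n (Prim p) \<eta> \<rho> = Delta n (P p \<eta>)"
| "sem P n (AV a) \<eta> \<rho> = \<rho> a"
| "sem P n TT \<eta> \<rho> = tuples n"
| "sem P n FF \<eta> \<rho> = {}"
| "sem P n (Conj x y) \<eta> \<rho> = sem P n x \<eta> \<rho> \<inter> sem P n y \<eta> \<rho>"
| "sem P n (Disj x y) \<eta> \<rho> = sem P n x \<eta> \<rho> \<union> sem P n y \<eta> \<rho>"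
| "sem P n (Star x y) \<eta> \<rho> = sepstar (sem P n x \<eta> \<rho>) (sem P n y \<eta> \<rho>)"
| "sem P n (Ex v x) \<eta> \<rho> = (\<Union>k. sem P n x (\<eta>(v := k)) \<rho>)"
| "sem P n (All v x) \<eta> \<rho> = (\<Inter>k. sem P n x (\<eta>(v := k)) \<rho>)"

definition valid :: "('p \<Rightarrow> ('v \<Rightarrow> int) \<Rightarrow> heap set) \<Rightarrow> nat \<Rightarrow> ('p, 'v, 'a) assn
                      \<Rightarrow> ('p, 'v, 'a) assn \<Rightarrow> ('v \<Rightarrow> int) \<Rightarrow> bool" where
  "valid P n \<phi> \<psi> \<eta> \<longleftrightarrow>
     (\<forall>\<rho>. (\<forall>a. \<rho> a \<in> IRel n) \<longrightarrow> sem P n \<phi> \<eta> \<rho> \<subseteq> sem P n \<psi> \<eta> \<rho>)"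

fun avfree :: "('p, 'v, 'a) assn \<Rightarrow> bool" where
  "avfree (Prim p) = True"
| "avfree (AV a) = False"
| "avfree TT = True"
| "avfree FF = True"
| "avfree (Conj x y) = (avfree x \<and> avfree y)"
| "avfree (Disj x y) = (avfree x \<and> avfree y)"
| "avfree (Star x y) = (avfree x \<and> avfree y)"
| "avfree (Ex v x) = avfree x"
| "avfree (All v x) = avfree x"

text \<open>Unary meaning of an assertion-variable-free assertion, as a set of heaps
  (independent of \<rho>; we take the empty valuation, which is in IRel 1).\<close>

definition sem1 :: "('p \<Rightarrow> ('v \<Rightarrow> int) \<Rightarrow> heap set) \<Rightarrow> ('p, 'v, 'a) assn
                     \<Rightarrow> ('v \<Rightarrow> int) \<Rightarrow> heap set" where
  "sem1 P \<phi> \<eta> = {h. [h] \<in> sem P 1 \<phi> \<eta> (\<lambda>_. {})}"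

text \<open>A conjunct/disjunct is a pair (phi, [a1,...,ak]) standing for phi * a1 * ... * ak.\<close>

definition starred :: "('p, 'v, 'a) assn \<times> 'a list \<Rightarrow> ('p, 'v, 'a) assn" where
  "starred c = foldl (\<lambda>x a. Star x (AV a)) (fst c) (snd c)"

fun conjs :: "('p, 'v, 'a) assn list \<Rightarrow> ('p, 'v, 'a) assn" where
  "conjs [] = TT"
| "conjs [x] = x"
| "conjs (x # xs) = Conj x (conjs xs)"

fun disjs :: "('p, 'v, 'a) assn list \<Rightarrow> ('p, 'v, 'a) assn" where
  "disjs [] = FF"
| "disjs [x] = x"
| "disjs (x # xs) = Disj x (disjs xs)"

definition canonical :: "(('p, 'v, 'a) assn \<times> 'a list) list
                          \<Rightarrow> (('p, 'v, 'a) assn \<times> 'a list) list \<Rightarrow> bool" where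
  "canonical L R \<longleftrightarrow> L \<noteq> [] \<and> (\<forall>c\<in>set L. avfree (fst c)) \<and>
     (\<forall>d\<in>set R. avfree (fst d) \<and> set (snd d) \<subseteq> (\<Union>c\<in>set L. set (snd c)))"

definition mult_ge :: "'a list \<Rightarrow> 'a list \<Rightarrow> 'a set \<Rightarrow> bool" where
  "mult_ge as bs V \<longleftrightarrow> (\<forall>c\<in>V. count_list bs c \<le> count_list as c)"

definition PC :: "('p \<Rightarrow> ('v \<Rightarrow> int) \<Rightarrow> heap set) \<Rightarrow> (('p, 'v, 'a) assn \<times> 'a list) list
                   \<Rightarrow> (('p, 'v, 'a) assn \<times> 'a list) list \<Rightarrow> ('v \<Rightarrow> int) \<Rightarrow> bool" where
  "PC P L R \<eta> \<longleftrightarrow>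
    (\<forall>h hs. h \<in> heaps \<and> hs \<in> tuples (length L) \<and>
        (\<forall>i<length L. hs ! i \<subseteq>\<^sub>m h \<and> hs ! i \<in> sem1 P (fst (L ! i)) \<eta>) \<longrightarrow>
      (\<exists>i<length L. \<exists>j<length R. hs ! i \<in> sem1 P (fst (R ! j)) \<eta> \<and>
          mult_ge (snd (L ! i)) (snd (R ! j)) (\<Union>c\<in>set L. set (snd c)))
      \<or> (\<exists>j<length R. snd (R ! j) = [] \<and> h \<in> sem1 P (fst (R ! j)) \<eta>))"

end

theory Submission
  imports Defs "HOL-Library.Multiset"
begin

(* The n-ary meaning of an assertion without assertion variables is determined by its
   unary meaning: for n >= 1 it is the diagonal Delta n (usem phi) of the upward closed
   set usem phi of heaps satisfying phi.  Assertion variables enter only through the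
   frames "X * a_1 * ... * a_k" (star_vars), whose behaviour we control by three facts:
   the result depends only on the multiset of variables, it distributes over unions,
   and a diagonal Delta n {e} of a single heap absorbs any frame.

   Given a tuple hs satisfying every conjunct phi_i * a_i1 * ..., we pick heaps e_i in
   usem phi_i with hs in Delta n {e_i} and glue them into one heap E below every
   component of hs.  The Parametricity Condition for E and the e_i either yields a
   disjunct psi_j satisfied by some e_i whose variables are among those of conjunct i
   (then the surplus variables are absorbed), or an empty disjunct satisfied by E.
   This proves n-ary validity for every n >= 1, in particular binary validity. *)

lemma heaps_map_add: "f \<in> heaps \<Longrightarrow> g \<in> heaps \<Longrightarrow> f ++ g \<in> heaps"
  by (auto simp: heaps_def)

lemma heaps_restrict: "h \<in> heaps \<Longrightarrow> h |` X \<in> heaps"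
  by (auto simp: heaps_def intro: finite_subset)

lemma heaps_map_le: "f \<subseteq>\<^sub>m h \<Longrightarrow> h \<in> heaps \<Longrightarrow> f \<in> heaps"
  by (auto simp: heaps_def dest!: map_le_implies_dom_le intro: finite_subset)

lemma empty_heap: "Map.empty \<in> heaps"
  by (simp add: heaps_def)

lemma map_add_restrict_compl: "f \<subseteq>\<^sub>m h \<Longrightarrow> f ++ (h |` (- dom f)) = h"
  by (rule ext) (auto simp: map_le_def map_add_def restrict_map_def split: option.splits)

lemma map_le_map_add_disjoint: "dom f \<inter> dom g = {} \<Longrightarrow> f \<subseteq>\<^sub>m f ++ g"
  by (metis map_add_comm map_le_map_add)

lemma map_add_mono_disjoint:
  assumes "x \<subseteq>\<^sub>m f" "y \<subseteq>\<^sub>m g" "dom f \<inter> dom g = {}"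
  shows "x ++ y \<subseteq>\<^sub>m f ++ g"
proof (rule map_add_le_mapI)
  show "y \<subseteq>\<^sub>m f ++ g" using assms(2) map_le_map_add map_le_trans by blast
  show "x \<subseteq>\<^sub>m f ++ g" using assms(1) map_le_map_add_disjoint[OF assms(3)] map_le_trans by blast
qed

text \<open>Heaps lying below every component of a nonempty tuple of heaps have a common upper
  bound that still lies below every component: restrict one component to their domains.\<close>

lemma glue_lower_bounds:
  assumes hs: "hs \<noteq> []" "set hs \<subseteq> heaps"
    and below: "\<And>k h. k \<in> K \<Longrightarrow> h \<in> set hs \<Longrightarrow> e k \<subseteq>\<^sub>m h"
  obtains z where "z \<in> heaps" "\<And>k. k \<in> K \<Longrightarrow> e k \<subseteq>\<^sub>m z" "\<And>h. h \<in> set hs \<Longrightarrow> z \<subseteq>\<^sub>m h"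
proof
  define z where "z = hd hs |` (\<Union>k\<in>K. dom (e k))"
  have hd: "hd hs \<in> set hs" using hs(1) by simp
  then show "z \<in> heaps" using hs(2) by (auto simp: z_def heaps_restrict)
  show ez: "e k \<subseteq>\<^sub>m z" if "k \<in> K" for k
    using below[OF that hd] that unfolding z_def map_le_def restrict_map_def by auto
  show "z \<subseteq>\<^sub>m h" if h: "h \<in> set hs" for h
  proof (unfold map_le_def, intro ballI)
    fix a assume "a \<in> dom z"
    then obtain k where k: "k \<in> K" and a: "a \<in> dom (e k)" by (auto simp: z_def split: if_splits)
    then have "z a = e k a" using ez[OF k] by (auto simp: map_le_def)
    also have "\<dots> = h a" using below[OF k h] a by (auto simp: map_le_def)
    finally show "z a = h a" .
  qed
qed

section \<open>Unary semantics of assertions without assertion variables\<close>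

definition heap_star :: "heap set \<Rightarrow> heap set \<Rightarrow> heap set" where
  "heap_star A B = {f ++ g | f g. f \<in> A \<and> g \<in> B \<and> dom f \<inter> dom g = {}}"

definition upclosed :: "heap set \<Rightarrow> bool" where
  "upclosed A \<longleftrightarrow> A \<subseteq> heaps \<and> (\<forall>f\<in>A. \<forall>h\<in>heaps. f \<subseteq>\<^sub>m h \<longrightarrow> h \<in> A)"

text \<open>The intended unary meaning, computed compositionally; assertion variables are
  irrelevant here since the lemmas about usem assume avfree.\<close>

fun usem :: "('p \<Rightarrow> ('v \<Rightarrow> int) \<Rightarrow> heap set) \<Rightarrow> ('p, 'v, 'a) assn \<Rightarrow> ('v \<Rightarrow> int) \<Rightarrow> heap set" where
  "usem P (Prim p) \<eta> = {h\<in>heaps. \<exists>f\<in>P p \<eta>. f \<subseteq>\<^sub>m h}"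
| "usem P (AV a) \<eta> = {}"
| "usem P TT \<eta> = heaps"
| "usem P FF \<eta> = {}"
| "usem P (Conj x y) \<eta> = usem P x \<eta> \<inter> usem P y \<eta>"
| "usem P (Disj x y) \<eta> = usem P x \<eta> \<union> usem P y \<eta>"
| "usem P (Star x y) \<eta> = heap_star (usem P x \<eta>) (usem P y \<eta>)"
| "usem P (Ex v x) \<eta> = (\<Union>k. usem P x (\<eta>(v := k)))"
| "usem P (All v x) \<eta> = heaps \<inter> (\<Inter>k. usem P x (\<eta>(v := k)))"

text \<open>Unary meanings of variable-free assertions are upward closed; Delta commutes with
  intersection only on such sets.\<close>

lemma upclosed_heap_star:
  assumes A: "upclosed A" and B: "upclosed B"
  shows "upclosed (heap_star A B)"
  unfolding upclosed_def
proof (intro conjI ballI impI)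
  show "heap_star A B \<subseteq> heaps"
    using A B by (auto simp: upclosed_def heap_star_def intro!: heaps_map_add)
next
  fix z h assume "z \<in> heap_star A B" and h: "h \<in> heaps" and le: "z \<subseteq>\<^sub>m h"
  then obtain f g where fg: "z = f ++ g" "f \<in> A" "g \<in> B" "dom f \<inter> dom g = {}"
    by (auto simp: heap_star_def)
  have fh: "f \<subseteq>\<^sub>m h" using le fg map_le_map_add_disjoint map_le_trans by metis
  have gh: "g \<subseteq>\<^sub>m h" using le fg map_le_map_add map_le_trans by metis
  define g' where "g' = h |` (- dom f)"
  have "g \<subseteq>\<^sub>m g'" using gh fg(4) by (auto simp: g'_def map_le_def restrict_map_def)
  moreover have "g' \<in> heaps" using h by (simp add: g'_def heaps_restrict)
  ultimately have "g' \<in> B" using B fg(3) by (auto simp: upclosed_def)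
  moreover have "f ++ g' = h" using map_add_restrict_compl[OF fh] by (simp add: g'_def)
  moreover have "dom f \<inter> dom g' = {}" by (auto simp: g'_def)
  ultimately show "h \<in> heap_star A B" using fg(2) by (auto simp: heap_star_def)
qed

lemma upclosed_usem: "avfree \<phi> \<Longrightarrow> upclosed (usem P \<phi> \<eta>)"
proof (induction \<phi> arbitrary: \<eta>)
  case (Prim p) then show ?case by (auto simp: upclosed_def intro: map_le_trans)
next
  case (Star x y) then show ?case by (simp add: upclosed_heap_star)
next
  case (Ex v x)
  then have "\<And>\<eta>'. upclosed (usem P x \<eta>')" by simp
  then show ?case unfolding upclosed_def usem.simps by blast
next
  case (All v x)
  then have "\<And>\<eta>'. upclosed (usem P x \<eta>')" by simp
  then show ?case unfolding upclosed_def usem.simps by blast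
qed (auto simp: upclosed_def)

section \<open>The n-ary semantics as a diagonal\<close>

lemma tuples_nth: "hs \<in> tuples n \<longleftrightarrow> length hs = n \<and> (\<forall>k<n. hs ! k \<in> heaps)"
  by (auto simp: tuples_def subset_code(1) all_set_conv_all_nth)

lemma Delta_nth: "hs \<in> Delta n X \<longleftrightarrow> hs \<in> tuples n \<and> (\<exists>f\<in>X. \<forall>k<length hs. f \<subseteq>\<^sub>m hs ! k)"
  by (auto simp: Delta_def all_set_conv_all_nth)

lemma Delta_mono: "X \<subseteq> Y \<Longrightarrow> Delta n X \<subseteq> Delta n Y"
  by (auto simp: Delta_def)

lemma Delta_heaps: "Delta n heaps = tuples n"
  using empty_heap by (auto simp: Delta_def intro!: bexI[of _ Map.empty])

lemma Delta_UN: "(\<Union>k. Delta n (A k)) = Delta n (\<Union>k. A k)"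
  by (auto simp: Delta_def)

lemma Delta_upward_closure: "X \<subseteq> heaps \<Longrightarrow> Delta n X = Delta n {h\<in>heaps. \<exists>f\<in>X. f \<subseteq>\<^sub>m h}"
  unfolding Delta_def by (auto intro: map_le_trans) (meson map_le_refl subsetD)

text \<open>For a nonempty family of upward closed sets, Delta commutes with intersection:
  witnesses for the individual sets are glued into one witness (this needs n \<ge> 1).\<close>

lemma Delta_Inter:
  assumes A: "\<And>X. X \<in> \<A> \<Longrightarrow> upclosed X" and ne: "\<A> \<noteq> {}" and n: "n \<ge> 1"
  shows "(\<Inter>X\<in>\<A>. Delta n X) = Delta n (\<Inter>\<A>)"
proof
  show "Delta n (\<Inter>\<A>) \<subseteq> (\<Inter>X\<in>\<A>. Delta n X)" by (auto simp: Delta_def)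
next
  show "(\<Inter>X\<in>\<A>. Delta n X) \<subseteq> Delta n (\<Inter>\<A>)"
  proof
    fix hs assume hs: "hs \<in> (\<Inter>X\<in>\<A>. Delta n X)"
    then have t: "hs \<in> tuples n" using ne by (auto simp: Delta_def)
    have "\<forall>X\<in>\<A>. \<exists>e. e \<in> X \<and> (\<forall>h\<in>set hs. e \<subseteq>\<^sub>m h)" using hs by (auto simp: Delta_def)
    then obtain e where e: "\<And>X. X \<in> \<A> \<Longrightarrow> e X \<in> X"
      "\<And>X h. X \<in> \<A> \<Longrightarrow> h \<in> set hs \<Longrightarrow> e X \<subseteq>\<^sub>m h"
      by metis
    have "hs \<noteq> []" "set hs \<subseteq> heaps" using t n by (auto simp: tuples_def)
    then obtain z where z: "z \<in> heaps" "\<And>X. X \<in> \<A> \<Longrightarrow> e X \<subseteq>\<^sub>m z"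
      "\<And>h. h \<in> set hs \<Longrightarrow> z \<subseteq>\<^sub>m h"
      using glue_lower_bounds[of hs \<A> e] e(2) by metis
    have "z \<in> X" if "X \<in> \<A>" for X
      using A[OF that] e(1)[OF that] z(1) z(2)[OF that] unfolding upclosed_def by blast
    then show "hs \<in> Delta n (\<Inter>\<A>)" using t z(3) by (auto simp: Delta_def)
  qed
qed

text \<open>A componentwise split of a tuple above x and y yields a tuple above x ++ y
  (x and y are disjoint because the first components are).\<close>

lemma sepstar_Delta_subset:
  assumes n: "n \<ge> 1"
  shows "sepstar (Delta n A) (Delta n B) \<subseteq> Delta n (heap_star A B)"
proof
  fix hs assume "hs \<in> sepstar (Delta n A) (Delta n B)"
  then obtain fs gs where hs: "hs = map2 (++) fs gs" and fs: "fs \<in> Delta n A"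
    and gs: "gs \<in> Delta n B" and d: "list_all2 (\<lambda>f g. dom f \<inter> dom g = {}) fs gs"
    unfolding sepstar_def by blast
  from fs obtain x where x: "x \<in> A" "\<forall>k<n. x \<subseteq>\<^sub>m fs ! k" and tf: "fs \<in> tuples n"
    by (auto simp: Delta_nth tuples_nth)
  from gs obtain y where y: "y \<in> B" "\<forall>k<n. y \<subseteq>\<^sub>m gs ! k" and tg: "gs \<in> tuples n"
    by (auto simp: Delta_nth tuples_nth)
  have l: "length fs = n" "length gs = n" using tf tg by (auto simp: tuples_nth)
  have dk: "dom (fs ! k) \<inter> dom (gs ! k) = {}" if "k < n" for k
    using d that l by (auto simp: list_all2_conv_all_nth)
  have "dom x \<subseteq> dom (fs ! 0)" "dom y \<subseteq> dom (gs ! 0)"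
    using x(2) y(2) n by (simp_all add: map_le_implies_dom_le)
  then have "dom x \<inter> dom y = {}" using dk[of 0] n by auto
  then have "x ++ y \<in> heap_star A B" using x y by (auto simp: heap_star_def)
  moreover have "hs \<in> tuples n" using tf tg l hs by (auto simp: tuples_nth heaps_map_add)
  moreover have "\<forall>k<n. x ++ y \<subseteq>\<^sub>m hs ! k"
    using map_add_mono_disjoint[of x _ y] x(2) y(2) dk l hs by auto
  ultimately show "hs \<in> Delta n (heap_star A B)" using l hs by (auto simp: Delta_nth)
qed

text \<open>Conversely, a tuple above a single split x ++ y splits componentwise: x in every
  first component, the rest of each heap in the second.\<close>

lemma Delta_heap_star_subset:
  assumes A: "A \<subseteq> heaps"
  shows "Delta n (heap_star A B) \<subseteq> sepstar (Delta n A) (Delta n B)"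
proof
  fix hs assume "hs \<in> Delta n (heap_star A B)"
  then obtain z where th: "hs \<in> tuples n" and z: "z \<in> heap_star A B"
    and zh: "\<forall>k<n. z \<subseteq>\<^sub>m hs ! k"
    by (auto simp: Delta_nth tuples_nth)
  from z obtain x y where xy: "z = x ++ y" "x \<in> A" "y \<in> B" "dom x \<inter> dom y = {}"
    by (auto simp: heap_star_def)
  have lh: "length hs = n" and hh: "\<forall>k<n. hs ! k \<in> heaps" using th by (auto simp: tuples_nth)
  have xh: "x \<subseteq>\<^sub>m hs ! k" if "k < n" for k
    using map_le_trans[OF map_le_map_add_disjoint[OF xy(4)]] zh that xy(1) by auto
  have yh: "y \<subseteq>\<^sub>m hs ! k" if "k < n" for k
    using map_le_trans[OF map_le_map_add] zh that xy(1) by auto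
  define fs where "fs = replicate n x"
  define gs where "gs = map (\<lambda>h. h |` (- dom x)) hs"
  have "x \<in> heaps" using A xy(2) by blast
  then have "fs \<in> Delta n A"
    using xy(2) by (auto simp: Delta_nth tuples_nth fs_def intro!: bexI[of _ x])
  moreover have "gs \<in> Delta n B"
  proof -
    have "gs \<in> tuples n" using lh hh by (auto simp: tuples_nth gs_def heaps_restrict)
    moreover have "\<forall>k<length gs. y \<subseteq>\<^sub>m gs ! k"
      using yh xy(4) lh by (auto simp: gs_def map_le_def restrict_map_def)
    ultimately show ?thesis using xy(3) by (auto simp: Delta_nth)
  qed
  moreover have "list_all2 (\<lambda>f g. dom f \<inter> dom g = {}) fs gs"
    using lh by (auto simp: list_all2_conv_all_nth fs_def gs_def)
  moreover have "hs = map2 (++) fs gs"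
    by (rule nth_equalityI) (auto simp: fs_def gs_def lh map_add_restrict_compl xh)
  ultimately show "hs \<in> sepstar (Delta n A) (Delta n B)" unfolding sepstar_def by blast
qed

lemma Delta_heap_star:
  "A \<subseteq> heaps \<Longrightarrow> n \<ge> 1 \<Longrightarrow> sepstar (Delta n A) (Delta n B) = Delta n (heap_star A B)"
  by (rule antisym) (simp_all add: sepstar_Delta_subset Delta_heap_star_subset)

lemma sem_avfree:
  assumes P: "\<forall>p \<eta>'. P p \<eta>' \<subseteq> heaps" and n: "n \<ge> 1"
  shows "avfree \<phi> \<Longrightarrow> sem P n \<phi> \<eta> \<rho> = Delta n (usem P \<phi> \<eta>)"
proof (induction \<phi> arbitrary: \<eta>)
  case (Prim p)
  have "P p \<eta> \<subseteq> heaps" using P by blast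
  then show ?case unfolding sem.simps usem.simps by (rule Delta_upward_closure)
next
  case TT then show ?case by (simp add: Delta_heaps)
next
  case FF then show ?case by (simp add: Delta_def)
next
  case (Conj x y)
  then have "upclosed (usem P x \<eta>)" "upclosed (usem P y \<eta>)" by (simp_all add: upclosed_usem)
  then show ?case using Conj Delta_Inter[of "{usem P x \<eta>, usem P y \<eta>}" n] n by auto
next
  case (Disj x y) then show ?case by (auto simp: Delta_def)
next
  case (Star x y)
  then have "usem P x \<eta> \<subseteq> heaps" by (simp add: upclosed_usem[unfolded upclosed_def])
  then show ?case using Star Delta_heap_star[OF _ n] by simp
next
  case (Ex v x) then show ?case by (simp add: Delta_UN)
next
  case (All v x)
  then have up: "\<And>\<eta>'. upclosed (usem P x \<eta>')" by (simp add: upclosed_usem)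
  then have "(\<Inter>k. usem P x (\<eta>(v := k))) \<subseteq> heaps"
    unfolding upclosed_def by blast
  then have "usem P (All v x) \<eta> = (\<Inter>k. usem P x (\<eta>(v := k)))" by auto
  moreover have "\<And>X. X \<in> range (\<lambda>k. usem P x (\<eta>(v := k))) \<Longrightarrow> upclosed X" using up by auto
  ultimately show ?case
    using All Delta_Inter[of "range (\<lambda>k. usem P x (\<eta>(v := k)))" n] n by simp
qed simp

lemma sem1_avfree:
  assumes P: "\<forall>p \<eta>'. P p \<eta>' \<subseteq> heaps" and av: "avfree \<phi>"
  shows "sem1 P \<phi> \<eta> = usem P \<phi> \<eta>"
proof -
  have "[h] \<in> Delta 1 X \<longleftrightarrow> h \<in> heaps \<and> (\<exists>f\<in>X. f \<subseteq>\<^sub>m h)" for h X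
    by (simp add: Delta_def tuples_def)
  moreover have "upclosed (usem P \<phi> \<eta>)" using av by (rule upclosed_usem)
  ultimately show ?thesis
    unfolding sem1_def sem_avfree[OF P order_refl av] upclosed_def
    by (auto intro: map_le_refl)
qed

section \<open>Framing with assertion variables\<close>

definition star_vars :: "('a \<Rightarrow> heap list set) \<Rightarrow> heap list set \<Rightarrow> 'a list \<Rightarrow> heap list set" where
  "star_vars \<rho> X as = foldl (\<lambda>X a. sepstar X (\<rho> a)) X as"

lemma sem_foldl_Star_AV:
  "sem P n (foldl (\<lambda>x a. Star x (AV a)) \<phi> as) \<eta> \<rho> = star_vars \<rho> (sem P n \<phi> \<eta> \<rho>) as"
  by (induction as arbitrary: \<phi>) (simp_all add: star_vars_def)

lemma sem_starred: "sem P n (starred c) \<eta> \<rho> = star_vars \<rho> (sem P n (fst c) \<eta> \<rho>) (snd c)"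
  by (simp add: starred_def sem_foldl_Star_AV)

lemma star_vars_append: "star_vars \<rho> X (as @ bs) = star_vars \<rho> (star_vars \<rho> X as) bs"
  by (simp add: star_vars_def)

lemma star_vars_mono: "X \<subseteq> Y \<Longrightarrow> star_vars \<rho> X as \<subseteq> star_vars \<rho> Y as"
proof (induction as arbitrary: X Y)
  case (Cons a as)
  have "sepstar X (\<rho> a) \<subseteq> sepstar Y (\<rho> a)" using Cons.prems unfolding sepstar_def by blast
  then show ?case using Cons.IH by (simp add: star_vars_def)
qed (simp add: star_vars_def)

lemma star_vars_UN: "star_vars \<rho> (\<Union>i\<in>I. X i) as = (\<Union>i\<in>I. star_vars \<rho> (X i) as)"
proof (induction as arbitrary: X)
  case (Cons a as)
  have "sepstar (\<Union>i\<in>I. X i) (\<rho> a) = (\<Union>i\<in>I. sepstar (X i) (\<rho> a))"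
    unfolding sepstar_def by blast
  then show ?case using Cons.IH by (simp add: star_vars_def)
qed (simp add: star_vars_def)

text \<open>The n-ary separating conjunction is right-commutative; hence frames only depend on
  the multiset of variables.\<close>

lemma sepstar_right_comm_sub: "sepstar (sepstar X R1) R2 \<subseteq> sepstar (sepstar X R2) R1"
proof
  fix hs assume "hs \<in> sepstar (sepstar X R1) R2"
  then obtain fs gs ks where hs: "hs = map2 (++) (map2 (++) fs gs) ks"
    and fs: "fs \<in> X" and gs: "gs \<in> R1" and ks: "ks \<in> R2"
    and d1: "list_all2 (\<lambda>f g. dom f \<inter> dom g = {}) (map2 (++) fs gs) ks"
    and d2: "list_all2 (\<lambda>f g. dom f \<inter> dom g = {}) fs gs"
    unfolding sepstar_def by blast
  have l: "length gs = length fs" "length ks = length fs"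
    using list_all2_lengthD[OF d1] list_all2_lengthD[OF d2] by simp_all
  have dfg: "dom (fs ! k) \<inter> dom (gs ! k) = {}" if "k < length fs" for k
    using d2 that by (auto simp: list_all2_conv_all_nth)
  have dk: "dom ((fs ! k) ++ (gs ! k)) \<inter> dom (ks ! k) = {}" if "k < length fs" for k
    using d1 that l by (auto simp: list_all2_conv_all_nth)
  define vs where "vs = map2 (++) fs ks"
  have "list_all2 (\<lambda>f g. dom f \<inter> dom g = {}) fs ks"
    using dk l by (auto simp: list_all2_conv_all_nth)
  then have "vs \<in> sepstar X R2" using fs ks unfolding sepstar_def vs_def by blast
  moreover have "list_all2 (\<lambda>f g. dom f \<inter> dom g = {}) vs gs"
  proof -
    have "dom ((fs ! k) ++ (ks ! k)) \<inter> dom (gs ! k) = {}" if "k < length fs" for k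
      using dk[OF that] dfg[OF that] by auto
    then show ?thesis using l by (auto simp: list_all2_conv_all_nth vs_def)
  qed
  moreover have "hs = map2 (++) vs gs"
  proof (rule nth_equalityI)
    show "length hs = length (map2 (++) vs gs)" using hs l by (simp add: vs_def)
  next
    fix k assume "k < length hs"
    then have k: "k < length fs" using hs l by simp
    have "dom (gs ! k) \<inter> dom (ks ! k) = {}" using dk[OF k] by auto
    then have "(fs ! k) ++ (gs ! k) ++ (ks ! k) = (fs ! k) ++ (ks ! k) ++ (gs ! k)"
      by (metis map_add_assoc map_add_comm)
    then show "hs ! k = map2 (++) vs gs ! k" using k l hs by (simp add: vs_def)
  qed
  ultimately show "hs \<in> sepstar (sepstar X R2) R1" using gs unfolding sepstar_def by blast
qed

lemma sepstar_right_comm: "sepstar (sepstar X R1) R2 = sepstar (sepstar X R2) R1"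
  by (rule antisym) (rule sepstar_right_comm_sub)+

lemma star_vars_perm: "mset as = mset bs \<Longrightarrow> star_vars \<rho> X as = star_vars \<rho> X bs"
  unfolding star_vars_def foldl_conv_fold
  by (rule fun_cong[where x = X], rule fold_multiset_equiv) (auto simp: sepstar_right_comm)

text \<open>A diagonal generated by a single heap absorbs any frame of tuples: each component
  only grows, so it stays above the generating heap.\<close>

lemma star_vars_Delta_single:
  assumes "\<forall>a. \<rho> a \<subseteq> tuples n"
  shows "star_vars \<rho> (Delta n {e}) as \<subseteq> Delta n {e}"
proof (induction as)
  case (Cons a as)
  have "sepstar (Delta n {e}) (\<rho> a) \<subseteq> Delta n {e}"
  proof
    fix hs assume "hs \<in> sepstar (Delta n {e}) (\<rho> a)"
    then obtain fs gs where hs: "hs = map2 (++) fs gs" and fs: "fs \<in> Delta n {e}"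
      and gs: "gs \<in> tuples n" and d: "list_all2 (\<lambda>f g. dom f \<inter> dom g = {}) fs gs"
      using assms unfolding sepstar_def by blast
    have l: "length fs = n" "length gs = n" using fs gs by (auto simp: Delta_nth tuples_nth)
    have "hs ! k \<in> heaps \<and> e \<subseteq>\<^sub>m hs ! k" if k: "k < n" for k
    proof -
      have "fs ! k \<in> heaps" "gs ! k \<in> heaps" "e \<subseteq>\<^sub>m fs ! k"
        using fs gs k l by (auto simp: Delta_nth tuples_nth)
      moreover have "dom (fs ! k) \<inter> dom (gs ! k) = {}"
        using d k l by (auto simp: list_all2_conv_all_nth)
      ultimately show ?thesis
        using k l hs by (auto simp: heaps_map_add intro: map_le_trans[OF _ map_le_map_add_disjoint])
    qed
    then show "hs \<in> Delta n {e}" using hs l by (auto simp: Delta_nth tuples_nth)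
  qed
  then have "star_vars \<rho> (Delta n {e}) (a # as) \<subseteq> star_vars \<rho> (Delta n {e}) as"
    by (simp add: star_vars_def star_vars_mono[unfolded star_vars_def])
  then show ?case using Cons.IH by blast
qed (simp add: star_vars_def)

lemma star_vars_weaken:
  assumes \<rho>: "\<forall>a. \<rho> a \<subseteq> tuples n" and sub: "mset bs \<subseteq># mset as" and e: "e \<in> Y"
  shows "star_vars \<rho> (Delta n {e}) as \<subseteq> star_vars \<rho> (Delta n Y) bs"
proof -
  obtain cs where "mset cs = mset as - mset bs" by (metis ex_mset)
  then have "mset as = mset (cs @ bs)" using sub by (simp add: subset_mset.diff_add)
  then have "star_vars \<rho> (Delta n {e}) as = star_vars \<rho> (star_vars \<rho> (Delta n {e}) cs) bs"
    by (simp add: star_vars_perm[of as "cs @ bs"] star_vars_append)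
  also have "\<dots> \<subseteq> star_vars \<rho> (Delta n Y) bs"
  proof (rule star_vars_mono)
    have "star_vars \<rho> (Delta n {e}) cs \<subseteq> Delta n {e}" using \<rho> by (rule star_vars_Delta_single)
    also have "\<dots> \<subseteq> Delta n Y" using e by (simp add: Delta_mono)
    finally show "star_vars \<rho> (Delta n {e}) cs \<subseteq> Delta n Y" .
  qed
  finally show ?thesis .
qed

lemma sem_starred_single_witness:
  assumes P: "\<forall>p \<eta>'. P p \<eta>' \<subseteq> heaps" and n: "n \<ge> 1" and av: "avfree (fst c)"
    and hs: "hs \<in> sem P n (starred c) \<eta> \<rho>"
  obtains e where "e \<in> usem P (fst c) \<eta>" "hs \<in> star_vars \<rho> (Delta n {e}) (snd c)"
proof -
  have "Delta n (usem P (fst c) \<eta>) = (\<Union>e\<in>usem P (fst c) \<eta>. Delta n {e})"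
    by (auto simp: Delta_def)
  then have "hs \<in> (\<Union>e\<in>usem P (fst c) \<eta>. star_vars \<rho> (Delta n {e}) (snd c))"
    using hs by (simp add: sem_starred sem_avfree[OF P n av] star_vars_UN)
  then show ?thesis using that by blast
qed

lemma sem_conjs_le: "x \<in> set xs \<Longrightarrow> sem P n (conjs xs) \<eta> \<rho> \<subseteq> sem P n x \<eta> \<rho>"
  by (induction xs rule: conjs.induct) auto

lemma sem_disjs_ge: "x \<in> set xs \<Longrightarrow> sem P n x \<eta> \<rho> \<subseteq> sem P n (disjs xs) \<eta> \<rho>"
  by (induction xs rule: disjs.induct) auto

lemma mult_ge_subset_mset:
  assumes "mult_ge as bs V" "set bs \<subseteq> V"
  shows "mset bs \<subseteq># mset as"
proof (rule mset_subset_eqI)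
  fix c
  show "count (mset bs) c \<le> count (mset as) c"
  proof (cases "c \<in> V")
    case True then show ?thesis using assms(1) by (simp add: mult_ge_def count_mset)
  next
    case False then have "c \<notin> set bs" using assms(2) by auto
    then show ?thesis by (simp add: count_mset count_list_0_iff)
  qed
qed

lemma PC_case_nonempty:
  assumes P: "\<forall>p \<eta>'. P p \<eta>' \<subseteq> heaps" and n: "n \<ge> 1" and \<rho>: "\<forall>a. \<rho> a \<subseteq> tuples n"
    and d: "avfree (fst d)" "set (snd d) \<subseteq> V"
    and e: "e \<in> sem1 P (fst d) \<eta>" "mult_ge (snd c) (snd d) V"
    and hs: "hs \<in> star_vars \<rho> (Delta n {e}) (snd c)"
  shows "hs \<in> sem P n (starred d) \<eta> \<rho>"
proof -
  have "star_vars \<rho> (Delta n {e}) (snd c) \<subseteq> star_vars \<rho> (Delta n (usem P (fst d) \<eta>)) (snd d)"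
    using star_vars_weaken[OF \<rho> mult_ge_subset_mset[OF e(2) d(2)]] e(1) sem1_avfree[OF P d(1)]
    by simp
  then show ?thesis using hs by (simp add: sem_starred sem_avfree[OF P n d(1)] subset_iff)
qed

lemma PC_case_empty:
  assumes P: "\<forall>p \<eta>'. P p \<eta>' \<subseteq> heaps" and n: "n \<ge> 1"
    and d: "avfree (fst d)" "snd d = []"
    and E: "E \<in> sem1 P (fst d) \<eta>" "\<And>h. h \<in> set hs \<Longrightarrow> E \<subseteq>\<^sub>m h" and hs: "hs \<in> tuples n"
  shows "hs \<in> sem P n (starred d) \<eta> \<rho>"
  using E hs sem1_avfree[OF P d(1)]
  by (auto simp: sem_starred sem_avfree[OF P n d(1)] d(2) star_vars_def Delta_def)

lemma sem_conjs_witnesses: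
  assumes P: "\<forall>p \<eta>'. P p \<eta>' \<subseteq> heaps" and n: "n \<ge> 1" and \<rho>: "\<forall>a. \<rho> a \<subseteq> tuples n"
    and L: "L \<noteq> []" "\<And>i. i < length L \<Longrightarrow> avfree (fst (L ! i))"
    and hs: "hs \<in> sem P n (conjs (map starred L)) \<eta> \<rho>"
  obtains e E where
    "\<And>i. i < length L \<Longrightarrow> e i \<in> usem P (fst (L ! i)) \<eta>"
    "\<And>i. i < length L \<Longrightarrow> hs \<in> star_vars \<rho> (Delta n {e i}) (snd (L ! i))"
    "\<And>i. i < length L \<Longrightarrow> e i \<subseteq>\<^sub>m E"
    "E \<in> heaps" "hs \<in> tuples n" "\<And>h. h \<in> set hs \<Longrightarrow> E \<subseteq>\<^sub>m h"
proof -
  have "\<exists>e. e \<in> usem P (fst (L ! i)) \<eta> \<and> hs \<in> star_vars \<rho> (Delta n {e}) (snd (L ! i))"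
    if i: "i < length L" for i
  proof -
    have "starred (L ! i) \<in> set (map starred L)" using i by simp
    then have "hs \<in> sem P n (starred (L ! i)) \<eta> \<rho>"
      using sem_conjs_le[of _ _ P n \<eta> \<rho>] hs by blast
    then show ?thesis using sem_starred_single_witness[OF P n L(2)[OF i]] by metis
  qed
  then obtain e where e: "\<And>i. i < length L \<Longrightarrow> e i \<in> usem P (fst (L ! i)) \<eta>"
    "\<And>i. i < length L \<Longrightarrow> hs \<in> star_vars \<rho> (Delta n {e i}) (snd (L ! i))"
    by metis
  have eD: "hs \<in> Delta n {e i}" if "i < length L" for i
    using star_vars_Delta_single[OF \<rho>] e(2)[OF that] by blast
  then have th: "hs \<in> tuples n" using L(1) by (auto simp: Delta_def)
  then have "hs \<noteq> []" "set hs \<subseteq> heaps" using n by (auto simp: tuples_def)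
  moreover have "\<And>i h. i \<in> {..<length L} \<Longrightarrow> h \<in> set hs \<Longrightarrow> e i \<subseteq>\<^sub>m h"
    using eD by (auto simp: Delta_def)
  ultimately obtain E where E: "E \<in> heaps" "\<And>i. i \<in> {..<length L} \<Longrightarrow> e i \<subseteq>\<^sub>m E"
    "\<And>h. h \<in> set hs \<Longrightarrow> E \<subseteq>\<^sub>m h"
    using glue_lower_bounds[of hs "{..<length L}" e] by metis
  show ?thesis by (rule that) (use e th E in auto)
qed

theorem PC_implies_valid:
  fixes P :: "'p \<Rightarrow> ('v \<Rightarrow> int) \<Rightarrow> heap set"
    and L R :: "(('p, 'v, 'a) assn \<times> 'a list) list"
  assumes P: "\<forall>p \<eta>'. P p \<eta>' \<subseteq> heaps" and n: "n \<ge> 1"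
    and can: "canonical L R" and pc: "PC P L R \<eta>"
  shows "valid P n (conjs (map starred L)) (disjs (map starred R)) \<eta>"
  unfolding valid_def
proof (intro allI impI subsetI)
  fix \<rho> :: "'a \<Rightarrow> heap list set" and hs
  assume "\<forall>a. \<rho> a \<in> IRel n" and hs: "hs \<in> sem P n (conjs (map starred L)) \<eta> \<rho>"
  then have \<rho>: "\<forall>a. \<rho> a \<subseteq> tuples n" by (auto simp: IRel_def)
  define V where "V = (\<Union>c\<in>set L. set (snd c))"
  have L: "L \<noteq> []" "\<And>i. i < length L \<Longrightarrow> avfree (fst (L ! i))"
    and R: "\<And>j. j < length R \<Longrightarrow> avfree (fst (R ! j)) \<and> set (snd (R ! j)) \<subseteq> V"
    using can by (auto simp: canonical_def V_def)
  obtain e E where e: "\<And>i. i < length L \<Longrightarrow> e i \<in> usem P (fst (L ! i)) \<eta>"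
    "\<And>i. i < length L \<Longrightarrow> hs \<in> star_vars \<rho> (Delta n {e i}) (snd (L ! i))"
    "\<And>i. i < length L \<Longrightarrow> e i \<subseteq>\<^sub>m E"
    and E: "E \<in> heaps" "hs \<in> tuples n" "\<And>h. h \<in> set hs \<Longrightarrow> E \<subseteq>\<^sub>m h"
    using sem_conjs_witnesses[OF P n \<rho> L hs] by metis
  define es where "es = map e [0..<length L]"
  have "es \<in> tuples (length L)"
    using E(1) e(3) heaps_map_le by (auto simp: tuples_nth es_def)
  moreover have "\<forall>i<length L. es ! i \<subseteq>\<^sub>m E \<and> es ! i \<in> sem1 P (fst (L ! i)) \<eta>"
    using e(1,3) sem1_avfree[OF P L(2)] by (simp add: es_def)
  ultimately have "(\<exists>i<length L. \<exists>j<length R. es ! i \<in> sem1 P (fst (R ! j)) \<eta> \<and>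
        mult_ge (snd (L ! i)) (snd (R ! j)) V)
    \<or> (\<exists>j<length R. snd (R ! j) = [] \<and> E \<in> sem1 P (fst (R ! j)) \<eta>)"
    using pc E(1) unfolding PC_def V_def by blast
  then obtain j where "j < length R" "hs \<in> sem P n (starred (R ! j)) \<eta> \<rho>"
  proof (elim disjE exE conjE)
    fix i j assume i: "i < length L" and j: "j < length R"
      and ej: "es ! i \<in> sem1 P (fst (R ! j)) \<eta>" and mg: "mult_ge (snd (L ! i)) (snd (R ! j)) V"
    have "hs \<in> sem P n (starred (R ! j)) \<eta> \<rho>"
      using PC_case_nonempty[OF P n \<rho> _ _ _ mg e(2)[OF i]] R[OF j] ej i by (simp add: es_def)
    then show ?thesis using that j by blast
  next
    fix j assume "j < length R" "snd (R ! j) = []" "E \<in> sem1 P (fst (R ! j)) \<eta>"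
    then show ?thesis using that PC_case_empty[OF P n _ _ _ E(3,2)] R by blast
  qed
  moreover from this(1) have "starred (R ! j) \<in> set (map starred R)" by simp
  ultimately show "hs \<in> sem P n (disjs (map starred R)) \<eta> \<rho>"
    using sem_disjs_ge[of _ _ P n \<eta> \<rho>] by blast
qed

theorem mainTheorem4:
  fixes P :: "'p \<Rightarrow> ('v \<Rightarrow> int) \<Rightarrow> heap set"
    and L R :: "(('p, 'v, 'a) assn \<times> 'a list) list"
    and \<eta> :: "'v \<Rightarrow> int"
  assumes "\<forall>p \<eta>'. P p \<eta>' \<subseteq> heaps"
    and "canonical L R"
    and "PC P L R \<eta>"
  shows "valid P 2 (conjs (map starred L)) (disjs (map starred R)) \<eta>"
  using PC_implies_valid[OF assms(1) _ assms(2,3)] by simp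

end
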